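(* Let $\alpha^\star_n\in\mathcal D^\star_n$ for every $n$ and $\alpha^\star\in\mathcal D^\star_0$ with $\sup_{\Delta\times[0,1]^d}|\alpha^\star_n-\alpha^\star|\to0$. Then for every $j\in\{1,\dots,d\}$, $$\sup_{(s,t,u)\in\Delta\times[0,1]}\Big|\sqrt n\,\lambda_n(s,t)\{I_n(U^\star_n+n^{-1/2}\alpha^\star_{n,j})(s,t,u)-u\}+\alpha^\star_j(s,t,u)\Big|\to0.$$
   Context: $C$ is a fixed $d$-dimensional copula. $\Delta=\{(s,t)\in[0,1]^2:s\le t\}$, $\lambda_n(s,t)=(\lfloor nt\rfloor-\lfloor ns\rfloor)/n$. $\mathcal E$ is the set of right-continuous nondecreasing $F:[0,1]\to[0,1]$ with $F(0)=0$, $F(1)=1$. $\mathcal E^\star_n$ is the set of $F^\star:\Delta\times[0,1]\to[0,1]$ such that $u\mapsto\lambda_n(s,t)^{-1}F^\star(s,t,u)\in\mathcal E$ when $\lfloor ns\rfloor<\lfloor nt\rfloor$ and $F^\star(s,t,\cdot)=0$ when $\lfloor ns\rfloor=\lfloor nt\rfloor$. For $F^\star\in\mathcal E^\star_n$, $I_n(F^\star)(s,t,u)=\inf\{v\in[0,1]:F^\star(s,t,v)\ge\lambda_n(s,t)u\}$. $U^\star_n(s,t,u)=\lambda_n(s,t)u$. For $H^\star$ on $\Delta\times[0,1]^d$, $H^\star_j(s,t,u)=H^\star(s,t,\vec u_{\{j\}})$, where $\vec u_{\{j\}}$ has $j$th component $u$ and others $1$; $\mathcal E^\star_{n,d}=\{H^\star:\Delta\times[0,1]^d\to[0,1]:H^\star_j\in\mathcal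 E^\star_n\ \forall j\}$. $C^\star_n(s,t,\vec u)=\lambda_n(s,t)C(\vec u)$. $\mathcal D^\star$ is the set of bounded $\alpha^\star$ on $\Delta\times[0,1]^d$ with $\alpha^\star(s,t,\cdot)=0$ if $s=t$, and $\alpha^\star(s,t,\vec u)=0$ if $s<t$ and either some component of $\vec u$ is $0$ or $\vec u=(1,\dots,1)$. $\mathcal D^\star_n=\{\alpha^\star\in\mathcal D^\star:C^\star_n+n^{-1/2}\alpha^\star\in\mathcal E^\star_{n,d}\}$, $\mathcal D^\star_0=\mathcal D^\star\cap\mathcal C(\Delta\times[0,1]^d)$. *)

theory Defs
  imports "HOL-Analysis.Analysis"
begin

text \<open>Points of [0,1]^d are vectors of type real^'d (d = CARD('d)).\<close>

definition unit_cube :: "(real^'d) set" where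
  "unit_cube = {u. \<forall>i. 0 \<le> u $ i \<and> u $ i \<le> 1}"

definition is_copula :: "(real^'d \<Rightarrow> real) \<Rightarrow> bool" where
  "is_copula C \<longleftrightarrow>
     (\<forall>u\<in>unit_cube. 0 \<le> C u \<and> C u \<le> 1) \<and>
     (\<forall>u\<in>unit_cube. (\<exists>i. u $ i = 0) \<longrightarrow> C u = 0) \<and>
     (\<forall>j. \<forall>v\<in>{0..1}. C (\<chi> i. if i = j then v else 1) = v) \<and>
     (\<forall>a\<in>unit_cube. \<forall>b\<in>unit_cube. (\<forall>i. a $ i \<le> b $ i) \<longrightarrow>
        0 \<le> (\<Sum>S\<in>Pow (UNIV :: 'd set). (-1) ^ card S * C (\<chi> i. if i \<in> S then a $ i else b $ i)))"

definition Delta :: "(real \<times> real) set" where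
  "Delta = {(s, t). 0 \<le> s \<and> s \<le> t \<and> t \<le> 1}"

definition lam :: "nat \<Rightarrow> real \<Rightarrow> real \<Rightarrow> real" where
  "lam n s t = real_of_int (\<lfloor>real n * t\<rfloor> - \<lfloor>real n * s\<rfloor>) / real n"

definition Ecal :: "(real \<Rightarrow> real) set" where
  "Ecal = {F. (\<forall>x\<in>{0..1}. 0 \<le> F x \<and> F x \<le> 1) \<and> mono_on {0..1} F \<and>
              (\<forall>x\<in>{0..<1}. continuous (at x within {x..1}) F) \<and> F 0 = 0 \<and> F 1 = 1}"

definition Estar :: "nat \<Rightarrow> (real \<Rightarrow> real \<Rightarrow> real \<Rightarrow> real) set" where
  "Estar n = {F. \<forall>(s,t)\<in>Delta.
      (\<forall>u\<in>{0..1}. 0 \<le> F s t u \<and> F s t u \<le> 1) \<and>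
      (if \<lfloor>real n * s\<rfloor> < \<lfloor>real n * t\<rfloor>
       then (\<lambda>u. F s t u / lam n s t) \<in> Ecal
       else (\<forall>u\<in>{0..1}. F s t u = 0))}"

definition In_op :: "nat \<Rightarrow> (real \<Rightarrow> real \<Rightarrow> real \<Rightarrow> real) \<Rightarrow> real \<Rightarrow> real \<Rightarrow> real \<Rightarrow> real" where
  "In_op n F s t u = Inf {v\<in>{0..1}. F s t v \<ge> lam n s t * u}"

definition Ustar :: "nat \<Rightarrow> real \<Rightarrow> real \<Rightarrow> real \<Rightarrow> real" where
  "Ustar n s t u = lam n s t * u"

definition vec_j :: "'d \<Rightarrow> real \<Rightarrow> real^'d" where
  "vec_j j u = (\<chi> i. if i = j then u else 1)"

definition marg :: "(real \<Rightarrow> real \<Rightarrow> real^'d \<Rightarrow> real) \<Rightarrow> 'd \<Rightarrow> real \<Rightarrow> real \<Rightarrow> real \<Rightarrow> real" where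
  "marg H j s t u = H s t (vec_j j u)"

definition Estar_d :: "nat \<Rightarrow> (real \<Rightarrow> real \<Rightarrow> real^'d \<Rightarrow> real) set" where
  "Estar_d n = {H. (\<forall>(s,t)\<in>Delta. \<forall>u\<in>unit_cube. 0 \<le> H s t u \<and> H s t u \<le> 1) \<and>
                   (\<forall>j. marg H j \<in> Estar n)}"

definition Cstar :: "(real^'d \<Rightarrow> real) \<Rightarrow> nat \<Rightarrow> real \<Rightarrow> real \<Rightarrow> real^'d \<Rightarrow> real" where
  "Cstar C n s t u = lam n s t * C u"

definition Dstar :: "(real \<Rightarrow> real \<Rightarrow> real^'d \<Rightarrow> real) set" where
  "Dstar = {a. (\<exists>B. \<forall>(s,t)\<in>Delta. \<forall>u\<in>unit_cube. \<bar>a s t u\<bar> \<le> B) \<and>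
               (\<forall>s\<in>{0..1}. \<forall>u\<in>unit_cube. a s s u = 0) \<and>
               (\<forall>(s,t)\<in>Delta. s < t \<longrightarrow>
                  (\<forall>u\<in>unit_cube. ((\<exists>i. u $ i = 0) \<or> u = (\<chi> i. 1)) \<longrightarrow> a s t u = 0))}"

definition Dstar_n :: "(real^'d \<Rightarrow> real) \<Rightarrow> nat \<Rightarrow> (real \<Rightarrow> real \<Rightarrow> real^'d \<Rightarrow> real) set" where
  "Dstar_n C n = {a\<in>Dstar. (\<lambda>s t u. Cstar C n s t u + a s t u / sqrt (real n)) \<in> Estar_d n}"

definition Dstar_0 :: "(real \<Rightarrow> real \<Rightarrow> real^'d \<Rightarrow> real) set" where
  "Dstar_0 = {a\<in>Dstar. continuous_on {(s, t, u). (s, t) \<in> Delta \<and> u \<in> unit_cube}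
                          (\<lambda>(s, t, u). a s t u)}"

end

theory Submission
  imports Defs "HOL-Real_Asymp.Real_Asymp"
begin

text \<open>
  On a slice (s,t) with \<lambda> = lam n s t > 0, the inverse I of the perturbed uniform distribution
  v \<mapsto> \<lambda>v + \<alpha>_n(v)/\<surd>n satisfies \<surd>n \<lambda> (I - u) \<approx> -\<alpha>(I) up to sup |\<alpha>_n - \<alpha>|,
  by continuity of \<alpha> at I. It remains to replace \<alpha>(I) by \<alpha>(u): on slices with t - s small both
  are small because \<alpha> vanishes on the diagonal; on the other slices \<surd>n \<lambda> \<rightarrow> \<infinity>, which forces
  I - u \<rightarrow> 0 uniformly, and uniform continuity of \<alpha> on the compact domain finishes the argument.
\<close>

lemma Inf_perturbed_identity_bound:
  fixes g a :: "real \<Rightarrow> real" and M u \<epsilon> :: real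
  assumes M: "M > 0" and u: "u \<in> {0..1}" and g1: "g 1 = 0" and a0: "a 0 = 0"
    and close: "\<forall>v\<in>{0..1}. \<bar>g v - a v\<bar> \<le> \<epsilon>" and cont: "continuous_on {0..1} a"
  defines "I \<equiv> Inf {v\<in>{0..1}. M * u \<le> M * v + g v}"
  shows "I \<in> {0..1}" and "\<bar>M * (I - u) + a I\<bar> \<le> \<epsilon>"
proof -
  define S where "S = {v\<in>{0..1}. M * u \<le> M * v + g v}"
  have I: "I = Inf S" by (simp add: I_def S_def)
  have S1: "1 \<in> S" using g1 u M by (simp add: S_def)
  have bdd: "bdd_below S" unfolding S_def by (rule bdd_belowI[of _ 0]) auto
  have I1: "I \<le> 1" using cInf_lower[OF S1 bdd] I by simp
  have I0: "0 \<le> I" unfolding I using S1 by (intro cInf_greatest) (auto simp: S_def)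
  show I01: "I \<in> {0..1}" using I0 I1 by simp
  have \<epsilon>0: "0 \<le> \<epsilon>" using close by force
  have near_I: "\<exists>\<rho>>0. M * \<rho> \<le> \<eta> / 2 \<and> (\<forall>v\<in>{0..1}. \<bar>v - I\<bar> < \<rho> \<longrightarrow> \<bar>a v - a I\<bar> < \<eta> / 2)"
    if "\<eta> > 0" for \<eta>
  proof -
    obtain r where r: "r > 0" "\<forall>v\<in>{0..1}. dist v I < r \<longrightarrow> dist (a v) (a I) < \<eta> / 2"
      using cont I01 \<open>\<eta> > 0\<close> unfolding continuous_on_iff by (meson half_gt_zero)
    define \<rho> where "\<rho> = min r (\<eta> / (2 * M))"
    have "M * \<rho> \<le> M * (\<eta> / (2 * M))" using M by (intro mult_left_mono) (auto simp: \<rho>_def)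
    then show ?thesis using r M \<open>\<eta> > 0\<close>
      by (intro exI[of _ \<rho>]) (auto simp: \<rho>_def dist_real_def)
  qed
  have upper: "M * (I - u) + a I \<le> \<epsilon>"
  proof (rule field_le_epsilon)
    fix \<eta> :: real assume "\<eta> > 0"
    then obtain \<rho> where \<rho>: "\<rho> > 0" "M * \<rho> \<le> \<eta> / 2"
      and a\<rho>: "\<forall>v\<in>{0..1}. \<bar>v - I\<bar> < \<rho> \<longrightarrow> \<bar>a v - a I\<bar> < \<eta> / 2"
      using near_I by blast
    show "M * (I - u) + a I \<le> \<epsilon> + \<eta>"
    proof (cases "I = 0")
      case True
      have "0 \<le> M * u" using M u by simp
      then show ?thesis using True a0 \<epsilon>0 \<open>\<eta> > 0\<close> by simp
    next
      case False
      define v where "v = max 0 (I - \<rho> / 2)"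
      have v: "v < I" "v \<in> {0..1}" "I - v < \<rho>" using False I0 I1 \<rho>(1) by (auto simp: v_def)
      have "v \<notin> S" using cInf_lower[OF _ bdd, of v] I v(1) by auto
      then have below: "M * v + g v < M * u" using v(2) by (simp add: S_def)
      have "M * (I - v) \<le> M * \<rho>" using M v(3) by simp
      moreover have "\<bar>g v - a v\<bar> \<le> \<epsilon>" "\<bar>a v - a I\<bar> < \<eta> / 2" using close a\<rho> v by auto
      moreover have "M * (I - u) = M * (I - v) + M * v - M * u" by (simp add: algebra_simps)
      ultimately show ?thesis using below \<rho>(2) by linarith
    qed
  qed
  have lower: "- \<epsilon> \<le> M * (I - u) + a I"
  proof -
    have "- (M * (I - u) + a I) \<le> \<epsilon>"
    proof (rule field_le_epsilon)
      fix \<eta> :: real assume "\<eta> > 0"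
      then obtain \<rho> where \<rho>: "\<rho> > 0" "M * \<rho> \<le> \<eta> / 2"
        and a\<rho>: "\<forall>v\<in>{0..1}. \<bar>v - I\<bar> < \<rho> \<longrightarrow> \<bar>a v - a I\<bar> < \<eta> / 2"
        using near_I by blast
      obtain v where vS: "v \<in> S" and vI: "v < I + \<rho>"
        using cInf_less_iff[of S "I + \<rho>"] S1 bdd I \<rho>(1) by auto
      have "I \<le> v" using cInf_lower[OF vS bdd] I by simp
      have v01: "v \<in> {0..1}" and above: "M * u \<le> M * v + g v" using vS by (auto simp: S_def)
      have "M * (v - I) \<le> M * \<rho>" using M vI by simp
      moreover have "\<bar>g v - a v\<bar> \<le> \<epsilon>" "\<bar>a v - a I\<bar> < \<eta> / 2"
        using close a\<rho> v01 vI \<open>I \<le> v\<close> by auto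
      moreover have "M * (I - u) = M * v - M * u - M * (v - I)" by (simp add: algebra_simps)
      ultimately show "- (M * (I - u) + a I) \<le> \<epsilon> + \<eta>" using above \<rho>(2) by linarith
    qed
    then show ?thesis by linarith
  qed
  show "\<bar>M * (I - u) + a I\<bar> \<le> \<epsilon>" using upper lower by linarith
qed

lemma Inf_perturbed_identity_bound_at:
  fixes g a :: "real \<Rightarrow> real" and M u \<epsilon> B \<delta> \<eta> :: real
  assumes M: "M > 0" and u: "u \<in> {0..1}" and g1: "g 1 = 0" and a0: "a 0 = 0"
    and close: "\<forall>v\<in>{0..1}. \<bar>g v - a v\<bar> \<le> \<epsilon>" and cont: "continuous_on {0..1} a"
    and bound: "\<forall>v\<in>{0..1}. \<bar>a v\<bar> \<le> B"
    and modulus: "\<forall>v\<in>{0..1}. \<forall>w\<in>{0..1}. \<bar>v - w\<bar> < \<delta> \<longrightarrow> \<bar>a v - a w\<bar> < \<eta>"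
    and small_or_steep: "(\<forall>v\<in>{0..1}. \<bar>a v\<bar> < \<eta>) \<or> \<epsilon> + B < M * \<delta>"
  defines "I \<equiv> Inf {v\<in>{0..1}. M * u \<le> M * v + g v}"
  shows "\<bar>M * (I - u) + a u\<bar> \<le> \<epsilon> + 2 * \<eta>"
proof -
  have I01: "I \<in> {0..1}" and core: "\<bar>M * (I - u) + a I\<bar> \<le> \<epsilon>"
    unfolding I_def using Inf_perturbed_identity_bound[OF M u g1 a0 close cont] by auto
  from small_or_steep have "\<bar>a u - a I\<bar> < 2 * \<eta>"
  proof
    assume "\<forall>v\<in>{0..1}. \<bar>a v\<bar> < \<eta>"
    then have "\<bar>a u\<bar> < \<eta>" "\<bar>a I\<bar> < \<eta>" using u I01 by blast+
    then show ?thesis by linarith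
  next
    assume steep: "\<epsilon> + B < M * \<delta>"
    have "\<bar>a I\<bar> \<le> B" "0 \<le> \<epsilon>" using bound close I01 by force+
    then have "M * \<bar>I - u\<bar> \<le> \<epsilon> + B" using core M by (simp add: abs_mult[symmetric])
    then have "M * \<bar>I - u\<bar> < M * \<delta>" using steep by linarith
    then have "\<bar>u - I\<bar> < \<delta>" "\<bar>u - u\<bar> < \<delta>" using M by (auto simp: abs_minus_commute)
    then have "\<bar>a u - a I\<bar> < \<eta>" "0 < \<eta>" using modulus u I01 by force+
    then show ?thesis by linarith
  qed
  then show ?thesis using core by linarith
qed

lemma lam_nonneg: "s \<le> t \<Longrightarrow> 0 \<le> lam n s t"
  unfolding lam_def by (intro divide_nonneg_nonneg) (auto intro!: floor_mono mult_left_mono)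

lemma lam_pos_imp_less:
  assumes "lam n s t > 0" shows "s < t"
proof (rule ccontr)
  assume "\<not> s < t"
  then have "\<lfloor>real n * t\<rfloor> \<le> \<lfloor>real n * s\<rfloor>" by (intro floor_mono mult_left_mono) auto
  then have "lam n s t \<le> 0" unfolding lam_def by (intro divide_nonpos_nonneg) auto
  then show False using assms by simp
qed

lemma diff_less_lam_plus_inverse:
  assumes "n \<ge> 1" shows "t - s < lam n s t + 1 / real n"
proof -
  have n: "real n > 0" using assms by simp
  have "real n * (t - s) < real_of_int (\<lfloor>real n * t\<rfloor> - \<lfloor>real n * s\<rfloor>) + 1"
    unfolding of_int_diff right_diff_distrib
    using of_int_floor_le[of "real n * s"] real_of_int_floor_add_one_gt[of "real n * t"] by linarith
  then have "t - s < (real_of_int (\<lfloor>real n * t\<rfloor> - \<lfloor>real n * s\<rfloor>) + 1) / real n"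
    using n by (simp add: field_simps)
  then show ?thesis by (simp add: lam_def add_divide_distrib)
qed

lemma vec_j_in_unit_cube: "v \<in> {0..1} \<Longrightarrow> vec_j j v \<in> unit_cube"
  by (auto simp: vec_j_def unit_cube_def)

lemma dist_vec_j_le: "dist (vec_j j v) (vec_j j w) \<le> \<bar>v - w\<bar>"
proof -
  have "dist (vec_j j v) (vec_j j w) \<le> (\<Sum>i\<in>UNIV. \<bar>(vec_j j v - vec_j j w) $ i\<bar>)"
    unfolding dist_norm by (rule norm_le_l1_cart)
  also have "\<dots> = (\<Sum>i\<in>UNIV. if i = j then \<bar>v - w\<bar> else 0)"
    by (intro sum.cong) (auto simp: vec_j_def)
  finally show ?thesis by simp
qed

lemma compact_Delta_times_unit_cube:
  "compact {(s, t, u). (s, t) \<in> Delta \<and> u \<in> (unit_cube :: (real^'d) set)}"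
  (is "compact ?K")
proof (subst compact_eq_bounded_closed, intro conjI)
  have "?K \<subseteq> cbox (0, 0, 0) (1, 1, 1)"
    by (auto simp: cbox_Pair_eq Delta_def unit_cube_def mem_box_cart)
  then show "bounded ?K" using bounded_cbox bounded_subset by blast
  have "?K = {x. 0 \<le> fst x} \<inter> {x. fst x \<le> fst (snd x)} \<inter> {x. fst (snd x) \<le> 1}
      \<inter> (\<Inter>i. {x. 0 \<le> snd (snd x) $ i} \<inter> {x. snd (snd x) $ i \<le> 1})"
    by (auto simp: Delta_def unit_cube_def)
  also have "closed \<dots>"
    by (intro closed_Int closed_INT closed_Collect_le continuous_intros ballI)
  finally show "closed ?K" .
qed

lemma Dstar_bdd_above_abs_diff:
  assumes "a \<in> Dstar" "b \<in> Dstar"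
  shows "bdd_above ((\<lambda>(s, t, u). \<bar>a s t u - b s t u\<bar>) `
           {(s, t, u). (s, t) \<in> Delta \<and> u \<in> unit_cube})"
proof -
  obtain A B where "\<forall>(s,t)\<in>Delta. \<forall>u\<in>unit_cube. \<bar>a s t u\<bar> \<le> A"
      and "\<forall>(s,t)\<in>Delta. \<forall>u\<in>unit_cube. \<bar>b s t u\<bar> \<le> B"
    using assms by (auto simp: Dstar_def)
  then show ?thesis by (intro bdd_aboveI[of _ "A + B"]) fastforce
qed

lemma SUP_tendsto_zero_imp_eventually_bound:
  fixes f :: "nat \<Rightarrow> 'a \<Rightarrow> real"
  assumes "(\<lambda>n. SUP x\<in>D. f n x) \<longlonglongrightarrow> 0" and "eventually (\<lambda>n. bdd_above (f n ` D)) sequentially"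
    and "e > 0"
  shows "eventually (\<lambda>n. \<forall>x\<in>D. f n x \<le> e) sequentially"
  using order_tendstoD(2)[OF assms(1) assms(3)] assms(2)
  by eventually_elim (auto intro: order_trans[OF cSUP_upper])

lemma eventually_bound_imp_SUP_tendsto_zero:
  fixes f :: "nat \<Rightarrow> 'a \<Rightarrow> real"
  assumes "D \<noteq> {}" and "\<And>n x. x \<in> D \<Longrightarrow> 0 \<le> f n x"
    and "\<And>e. e > 0 \<Longrightarrow> eventually (\<lambda>n. \<forall>x\<in>D. f n x \<le> e) sequentially"
  shows "(\<lambda>n. SUP x\<in>D. f n x) \<longlonglongrightarrow> 0"
proof (rule tendstoI)
  fix e :: real assume "e > 0"
  have "eventually (\<lambda>n. \<forall>x\<in>D. f n x \<le> e / 2) sequentially"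
    using assms(3)[of "e / 2"] \<open>e > 0\<close> by (simp only: half_gt_zero)
  then show "eventually (\<lambda>n. dist (SUP x\<in>D. f n x) 0 < e) sequentially"
  proof eventually_elim
    case (elim n)
    obtain x where "x \<in> D" using assms(1) by blast
    have "0 \<le> (SUP x\<in>D. f n x)"
      using assms(2)[OF \<open>x \<in> D\<close>] elim \<open>x \<in> D\<close> by (intro cSUP_upper2[where x=x] bdd_aboveI2[where M="e / 2"]) auto
    moreover have "(SUP x\<in>D. f n x) \<le> e / 2" using elim assms(1) by (intro cSUP_least) auto
    ultimately show ?case using \<open>e > 0\<close> by (simp add: dist_real_def)
  qed
qed

lemma Dstar_vec_j_endpoints:
  assumes "a \<in> Dstar" "(s, t) \<in> Delta" "s < t"
  shows "a s t (vec_j j 0) = 0" and "a s t (vec_j j 1) = 0"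
proof -
  have "vec_j j 0 $ j = 0" "vec_j j 1 = (\<chi> i. 1)" by (simp_all add: vec_j_def vec_eq_iff)
  moreover have "vec_j j 0 \<in> unit_cube" "vec_j j 1 \<in> unit_cube" by (simp_all add: vec_j_in_unit_cube)
  ultimately show "a s t (vec_j j 0) = 0" and "a s t (vec_j j 1) = 0"
    using assms unfolding Dstar_def by blast+
qed

lemma In_op_perturbed_uniform:
  assumes "n \<ge> 1" and "lam n s t > 0"
  shows "In_op n (\<lambda>s t v. Ustar n s t v + marg \<beta> j s t v / sqrt (real n)) s t u
       = Inf {v\<in>{0..1}. sqrt (real n) * lam n s t * u
                          \<le> sqrt (real n) * lam n s t * v + \<beta> s t (vec_j j v)}"
proof -
  have rn: "sqrt (real n) > 0" using assms(1) by simp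
  have "lam n s t * u \<le> lam n s t * v + g / sqrt (real n)
      \<longleftrightarrow> sqrt (real n) * lam n s t * u \<le> sqrt (real n) * lam n s t * v + g" for v g
  proof -
    have "sqrt (real n) * lam n s t * v + g = sqrt (real n) * (lam n s t * v + g / sqrt (real n))"
      using rn by (simp add: field_simps)
    then show ?thesis using rn by (simp add: mult.assoc)
  qed
  then show ?thesis by (simp add: In_op_def Ustar_def marg_def)
qed

lemma Dstar_0_slice_continuous:
  fixes \<alpha> :: "real \<Rightarrow> real \<Rightarrow> real^'d \<Rightarrow> real"
  assumes "\<alpha> \<in> Dstar_0" and "(s, t) \<in> Delta"
  shows "continuous_on {0..1} (\<lambda>v. \<alpha> s t (vec_j j v))"
proof -
  have "continuous_on {0..1} (\<lambda>v. if i = j then v else 1)" for i :: 'd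
    by (cases "i = j") auto
  then have "continuous_on {0..1} (\<lambda>v. (s, t, vec_j j v))"
    unfolding vec_j_def by (intro continuous_intros continuous_on_vec_lambda)
  moreover have "(\<lambda>v. (s, t, vec_j j v)) ` {0..1} \<subseteq> {(s, t, u). (s, t) \<in> Delta \<and> u \<in> unit_cube}"
    using assms(2) by (auto intro!: vec_j_in_unit_cube)
  ultimately show ?thesis
    using continuous_on_compose2[of _ "\<lambda>(s, t, u). \<alpha> s t u"] assms(1)
    by (fastforce simp: Dstar_0_def)
qed

lemma Dstar_0_slice_modulus:
  fixes \<alpha> :: "real \<Rightarrow> real \<Rightarrow> real^'d \<Rightarrow> real"
  assumes "\<alpha> \<in> Dstar_0" and "\<eta> > 0"
  obtains \<delta> where "\<delta> > 0"
    and "\<forall>(s, t)\<in>Delta. \<forall>x\<in>unit_cube. \<forall>y\<in>unit_cube. dist x y < \<delta> \<longrightarrow>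
           \<bar>\<alpha> s t x - \<alpha> s t y\<bar> < \<eta>"
    and "\<forall>(s, t)\<in>Delta. t - s < \<delta> \<longrightarrow> (\<forall>x\<in>unit_cube. \<bar>\<alpha> s t x\<bar> < \<eta>)"
proof -
  define K where "K = {(s, t, u). (s, t) \<in> Delta \<and> u \<in> (unit_cube :: (real^'d) set)}"
  have "uniformly_continuous_on K (\<lambda>(s, t, u). \<alpha> s t u)"
    using assms(1) compact_Delta_times_unit_cube
    by (intro compact_uniformly_continuous) (auto simp: Dstar_0_def K_def)
  then obtain \<delta> where \<delta>: "\<delta> > 0"
    and uc: "\<forall>p\<in>K. \<forall>q\<in>K. dist q p < \<delta> \<longrightarrow> dist ((\<lambda>(s, t, u). \<alpha> s t u) q) ((\<lambda>(s, t, u). \<alpha> s t u) p) < \<eta>"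
    using assms(2) unfolding uniformly_continuous_on_def by metis
  show thesis
  proof (rule that[OF \<delta>]; safe)
    fix s t :: real and x y :: "real^'d" assume "(s, t) \<in> Delta" "x \<in> unit_cube" "y \<in> unit_cube" "dist x y < \<delta>"
    then show "\<bar>\<alpha> s t x - \<alpha> s t y\<bar> < \<eta>"
      using uc[rule_format, of "(s, t, y)" "(s, t, x)"] by (simp add: K_def dist_Pair_Pair dist_real_def)
  next
    fix s t :: real and x :: "real^'d" assume st: "(s, t) \<in> Delta" and "t - s < \<delta>" and x: "x \<in> unit_cube"
    then have "(s, s) \<in> Delta" "dist (s, t, x) (s, s, x) < \<delta>" "\<alpha> s s x = 0"
      using assms(1) by (auto simp: Delta_def Dstar_0_def Dstar_def dist_Pair_Pair dist_real_def)
    then show "\<bar>\<alpha> s t x\<bar> < \<eta>"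
      using uc[rule_format, of "(s, s, x)" "(s, t, x)"] st x by (simp add: K_def dist_real_def)
  qed
qed

lemma In_op_perturbation_bound:
  fixes \<beta> \<alpha> :: "real \<Rightarrow> real \<Rightarrow> real^'d \<Rightarrow> real"
  assumes \<beta>: "\<beta> \<in> Dstar" and \<alpha>: "\<alpha> \<in> Dstar_0"
    and n: "n \<ge> 1" and st: "(s, t) \<in> Delta" and u: "u \<in> {0..1}"
    and close: "\<forall>(s, t)\<in>Delta. \<forall>x\<in>unit_cube. \<bar>\<beta> s t x - \<alpha> s t x\<bar> \<le> \<epsilon>"
    and bound: "\<forall>(s, t)\<in>Delta. \<forall>x\<in>unit_cube. \<bar>\<alpha> s t x\<bar> \<le> B"
    and modulus: "\<forall>(s, t)\<in>Delta. \<forall>x\<in>unit_cube. \<forall>y\<in>unit_cube. dist x y < \<delta> \<longrightarrow>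
                    \<bar>\<alpha> s t x - \<alpha> s t y\<bar> < \<eta>"
    and near_diagonal: "\<forall>(s, t)\<in>Delta. t - s < \<delta> \<longrightarrow> (\<forall>x\<in>unit_cube. \<bar>\<alpha> s t x\<bar> < \<eta>)"
    and n_large: "1 / real n \<le> \<delta> / 2" "2 * (\<epsilon> + B) < sqrt (real n) * \<delta>\<^sup>2"
  shows "\<bar>sqrt (real n) * lam n s t *
            (In_op n (\<lambda>s t v. Ustar n s t v + marg \<beta> j s t v / sqrt (real n)) s t u - u)
          + marg \<alpha> j s t u\<bar> \<le> \<epsilon> + 2 * \<eta>"
proof -
  define l where "l = lam n s t"
  define M where "M = sqrt (real n) * l"
  define g where "g v = \<beta> s t (vec_j j v)" for v
  define a where "a v = \<alpha> s t (vec_j j v)" for v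
  define I where "I = In_op n (\<lambda>s t v. Ustar n s t v + marg \<beta> j s t v / sqrt (real n)) s t u"
  have close: "\<forall>x\<in>unit_cube. \<bar>\<beta> s t x - \<alpha> s t x\<bar> \<le> \<epsilon>"
    and bound: "\<forall>x\<in>unit_cube. \<bar>\<alpha> s t x\<bar> \<le> B"
    and modulus: "\<forall>x\<in>unit_cube. \<forall>y\<in>unit_cube. dist x y < \<delta> \<longrightarrow> \<bar>\<alpha> s t x - \<alpha> s t y\<bar> < \<eta>"
    and near_diagonal: "t - s < \<delta> \<Longrightarrow> \<forall>x\<in>unit_cube. \<bar>\<alpha> s t x\<bar> < \<eta>"
    using close bound modulus near_diagonal st by auto
  have rn: "sqrt (real n) > 0" using n by simp
  have "0 < 1 / real n" using n by simp
  then have \<delta>: "\<delta> > 0" using n_large(1) by linarith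
  have \<epsilon>: "0 \<le> \<epsilon>" using close[rule_format, of "vec_j j 0"] by (simp add: vec_j_in_unit_cube)
  have a_near_diagonal: "\<forall>v\<in>{0..1}. \<bar>a v\<bar> < \<eta>" if "t - s < \<delta>"
    using near_diagonal that vec_j_in_unit_cube unfolding a_def by blast
  have gap: "t - s < l + \<delta> / 2"
    using diff_less_lam_plus_inverse[OF n, of t s] n_large(1) by (simp add: l_def)
  have l: "0 \<le> l" using st by (simp add: l_def lam_nonneg Delta_def)
  have term_eq: "sqrt (real n) * lam n s t *
            (In_op n (\<lambda>s t v. Ustar n s t v + marg \<beta> j s t v / sqrt (real n)) s t u - u)
          + marg \<alpha> j s t u = M * (I - u) + a u"
    by (simp add: M_def l_def I_def a_def marg_def)
  show ?thesis
  proof (cases "l = 0")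
    case True
    then have "t - s < \<delta>" using gap \<delta> by linarith
    then have "\<bar>a u\<bar> < \<eta>" using a_near_diagonal u by blast
    then show ?thesis using term_eq True \<epsilon> by (simp add: M_def)
  next
    case False
    then have "l > 0" using l by simp
    then have M: "M > 0" and "s < t"
      using rn lam_pos_imp_less[of n s t] by (simp_all add: M_def l_def)
    have "\<alpha> \<in> Dstar" using \<alpha> by (simp add: Dstar_0_def)
    then have g1: "g 1 = 0" and a0: "a 0 = 0"
      using Dstar_vec_j_endpoints[OF \<beta> st \<open>s < t\<close>] Dstar_vec_j_endpoints[OF _ st \<open>s < t\<close>]
      by (auto simp: g_def a_def)
    have I: "I = Inf {v\<in>{0..1}. M * u \<le> M * v + g v}"
      using In_op_perturbed_uniform[OF n] \<open>l > 0\<close> by (simp add: I_def M_def g_def l_def)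
    have g_close: "\<forall>v\<in>{0..1}. \<bar>g v - a v\<bar> \<le> \<epsilon>"
      using close vec_j_in_unit_cube unfolding g_def a_def by blast
    have a_bound: "\<forall>v\<in>{0..1}. \<bar>a v\<bar> \<le> B"
      using bound vec_j_in_unit_cube unfolding a_def by blast
    have a_modulus: "\<forall>v\<in>{0..1}. \<forall>w\<in>{0..1}. \<bar>v - w\<bar> < \<delta> \<longrightarrow> \<bar>a v - a w\<bar> < \<eta>"
    proof (intro ballI impI)
      fix v w :: real assume "v \<in> {0..1}" "w \<in> {0..1}" "\<bar>v - w\<bar> < \<delta>"
      moreover have "dist (vec_j j v) (vec_j j w) \<le> \<bar>v - w\<bar>" by (rule dist_vec_j_le)
      ultimately show "\<bar>a v - a w\<bar> < \<eta>"
        using modulus vec_j_in_unit_cube unfolding a_def by (meson le_less_trans)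
    qed
    \<comment> \<open>away from the diagonal, \<lambda> > \<delta>/2 and so \<surd>n \<lambda> \<delta> beats \<epsilon> + B\<close>
    have "(\<forall>v\<in>{0..1}. \<bar>a v\<bar> < \<eta>) \<or> \<epsilon> + B < M * \<delta>"
    proof (cases "t - s < \<delta>")
      case True
      then show ?thesis using a_near_diagonal by blast
    next
      case False
      have "\<epsilon> + B < sqrt (real n) * (\<delta> / 2) * \<delta>" using n_large(2) by (simp add: power2_eq_square)
      also have "\<dots> \<le> M * \<delta>" using False gap \<delta> rn by (simp add: M_def)
      finally show ?thesis ..
    qed
    then show ?thesis
      using term_eq Inf_perturbed_identity_bound_at[OF M u g1 a0 g_close _ a_bound a_modulus]
        Dstar_0_slice_continuous[OF \<alpha> st] by (simp add: I a_def)
  qed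
qed

theorem lemmaB2:
  fixes C :: "real^'d \<Rightarrow> real"
    and alpha_n :: "nat \<Rightarrow> real \<Rightarrow> real \<Rightarrow> real^'d \<Rightarrow> real"
    and alpha :: "real \<Rightarrow> real \<Rightarrow> real^'d \<Rightarrow> real"
  assumes "is_copula C"
    and "\<forall>n\<ge>1. alpha_n n \<in> Dstar_n C n"
    and "alpha \<in> Dstar_0"
    and "(\<lambda>n. SUP (s, t, u) \<in> {(s, t, u). (s, t) \<in> Delta \<and> u \<in> unit_cube}.
              \<bar>alpha_n n s t u - alpha s t u\<bar>) \<longlonglongrightarrow> 0"
  shows "\<forall>j. (\<lambda>n. SUP (s, t, u) \<in> {(s, t, u). (s, t) \<in> Delta \<and> u \<in> {0..1}}.
              \<bar>sqrt (real n) * lam n s t *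
                 (In_op n (\<lambda>s t v. Ustar n s t v + marg (alpha_n n) j s t v / sqrt (real n)) s t u - u)
               + marg alpha j s t u\<bar>) \<longlonglongrightarrow> 0"
proof (intro allI eventually_bound_imp_SUP_tendsto_zero)
  show "{(s, t, u). (s, t) \<in> Delta \<and> u \<in> {0..1::real}} \<noteq> {}"
    by (auto simp: Delta_def intro!: exI[where x = "0::real"])
next
  fix j :: 'd and e :: real
  assume "e > 0"
  define \<eta> where "\<eta> = e / 4"
  have \<eta>: "\<eta> > 0" using \<open>e > 0\<close> by (simp add: \<eta>_def)
  have \<alpha>: "alpha \<in> Dstar" using assms(3) by (simp add: Dstar_0_def)
  then obtain B where B: "\<forall>(s, t)\<in>Delta. \<forall>x\<in>unit_cube. \<bar>alpha s t x\<bar> \<le> B"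
    by (auto simp: Dstar_def)
  have \<beta>: "alpha_n n \<in> Dstar" if "n \<ge> 1" for n using assms(2) that by (simp add: Dstar_n_def)
  obtain \<delta> where \<delta>: "\<delta> > 0"
    and modulus: "\<forall>(s, t)\<in>Delta. \<forall>x\<in>unit_cube. \<forall>y\<in>unit_cube. dist x y < \<delta> \<longrightarrow>
                    \<bar>alpha s t x - alpha s t y\<bar> < \<eta>"
    and near_diagonal: "\<forall>(s, t)\<in>Delta. t - s < \<delta> \<longrightarrow> (\<forall>x\<in>unit_cube. \<bar>alpha s t x\<bar> < \<eta>)"
    using Dstar_0_slice_modulus[OF assms(3) \<eta>] by blast
  have "eventually (\<lambda>n. bdd_above ((\<lambda>(s, t, u). \<bar>alpha_n n s t u - alpha s t u\<bar>) `
          {(s, t, u). (s, t) \<in> Delta \<and> u \<in> unit_cube})) sequentially"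
    using eventually_ge_at_top[of 1] by eventually_elim (simp add: Dstar_bdd_above_abs_diff \<beta> \<alpha>)
  from SUP_tendsto_zero_imp_eventually_bound[OF assms(4) this \<eta>]
  have close: "eventually (\<lambda>n. \<forall>(s, t)\<in>Delta. \<forall>x\<in>unit_cube.
      \<bar>alpha_n n s t x - alpha s t x\<bar> \<le> \<eta>) sequentially"
    by eventually_elim fastforce
  have "eventually (\<lambda>n. 1 / real n \<le> \<delta> / 2) sequentially"
    and "eventually (\<lambda>n. 2 * (\<eta> + B) < sqrt (real n) * \<delta>\<^sup>2) sequentially"
    using \<delta> by real_asymp+
  with close eventually_ge_at_top[of 1]
  show "eventually (\<lambda>n. \<forall>x\<in>{(s, t, u). (s, t) \<in> Delta \<and> u \<in> {0..1}}. (\<lambda>(s, t, u).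
          \<bar>sqrt (real n) * lam n s t *
             (In_op n (\<lambda>s t v. Ustar n s t v + marg (alpha_n n) j s t v / sqrt (real n)) s t u - u)
           + marg alpha j s t u\<bar>) x \<le> e) sequentially"
  proof eventually_elim
    case (elim n)
    have "\<bar>sqrt (real n) * lam n s t *
            (In_op n (\<lambda>s t v. Ustar n s t v + marg (alpha_n n) j s t v / sqrt (real n)) s t u - u)
          + marg alpha j s t u\<bar> \<le> \<eta> + 2 * \<eta>" if "(s, t) \<in> Delta" "u \<in> {0..1}" for s t u
      by (rule In_op_perturbation_bound[OF \<beta>[OF elim(2)] assms(3) elim(2) that
            elim(1) B modulus near_diagonal elim(3,4)])
    moreover have "\<eta> + 2 * \<eta> \<le> e" using \<open>e > 0\<close> by (simp add: \<eta>_def)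
    ultimately show ?case by (fastforce intro: order_trans)
  qed
qed (simp split: prod.split)

end
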